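(* Let $H$ be a graph and $k\ge2$, and suppose $G=\mathsf{TJ}_k(H)$ is triangle-free. Then any two distinct nonadjacent vertices of $G$ have at most two common neighbors.
   Context: All graphs are finite, simple, undirected. A $k$-clique of a graph $H$ is a set of $k$ pairwise adjacent vertices. For a graph $H$ and integer $k\ge1$, the Token Jumping graph $\mathsf{TJ}_k(H)$ has as vertices the $k$-cliques of $H$, and two $k$-cliques $A,B$ are adjacent iff $|A\cap B|=k-1$. *)

theory Defs
  imports Main
begin

definition simple_graph :: "'a set \<Rightarrow> ('a \<Rightarrow> 'a \<Rightarrow> bool) \<Rightarrow> bool" where
  "simple_graph V E \<longleftrightarrow> finite V \<and> (\<forall>x y. E x y \<longrightarrow> x \<in> V \<and> y \<in> V)
     \<and> (\<forall>x y. E x y \<longrightarrow> E y x) \<and> (\<forall>x. \<not> E x x)"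

definition is_clique :: "'a set \<Rightarrow> ('a \<Rightarrow> 'a \<Rightarrow> bool) \<Rightarrow> nat \<Rightarrow> 'a set \<Rightarrow> bool" where
  "is_clique V E k A \<longleftrightarrow> A \<subseteq> V \<and> finite A \<and> card A = k
     \<and> (\<forall>x\<in>A. \<forall>y\<in>A. x \<noteq> y \<longrightarrow> E x y)"

definition TJ_vertices :: "'a set \<Rightarrow> ('a \<Rightarrow> 'a \<Rightarrow> bool) \<Rightarrow> nat \<Rightarrow> 'a set set" where
  "TJ_vertices V E k = {A. is_clique V E k A}"

definition TJ_adj :: "'a set \<Rightarrow> ('a \<Rightarrow> 'a \<Rightarrow> bool) \<Rightarrow> nat \<Rightarrow> 'a set \<Rightarrow> 'a set \<Rightarrow> bool" where
  "TJ_adj V E k A B \<longleftrightarrow> is_clique V E k A \<and> is_clique V E k B \<and> card (A \<inter> B) = k - 1"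

definition triangle_free :: "'b set \<Rightarrow> ('b \<Rightarrow> 'b \<Rightarrow> bool) \<Rightarrow> bool" where
  "triangle_free W R \<longleftrightarrow> \<not> (\<exists>x\<in>W. \<exists>y\<in>W. \<exists>z\<in>W. R x y \<and> R y z \<and> R x z)"

definition common_neighbors :: "'b set \<Rightarrow> ('b \<Rightarrow> 'b \<Rightarrow> bool) \<Rightarrow> 'b \<Rightarrow> 'b \<Rightarrow> 'b set" where
  "common_neighbors W R x y = {z\<in>W. R x z \<and> R y z}"

end

theory Submission
  imports Defs
begin

text \<open>A common neighbour C of A and B meets each of them in k - 1 of its k vertices,
  so it contains at least k - 2 vertices of A \<inter> B. As A and B are distinct and
  nonadjacent, A \<inter> B has exactly k - 2 elements, hence A \<inter> C = A - {x} for one of the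
  two vertices x of A - B. Two common neighbours giving the same x share the k - 1
  vertices of A \<inter> C and would form a triangle with A. Only cardinalities of cliques
  enter.\<close>

lemma card_Int_add_le_card_Int_Int:
  assumes "finite C"
  shows "card (A \<inter> C) + card (B \<inter> C) \<le> card C + card (A \<inter> B \<inter> C)"
proof -
  have "card (A \<inter> C) + card (B \<inter> C) = card ((A \<inter> C) \<union> (B \<inter> C)) + card (A \<inter> B \<inter> C)"
    using card_Un_Int[of "A \<inter> C" "B \<inter> C"] assms by (simp add: Int_ac)
  also have "card ((A \<inter> C) \<union> (B \<inter> C)) \<le> card C"
    using assms by (intro card_mono) auto
  finally show ?thesis by simp
qed

lemma card_Int_less_if_neq:
  assumes "finite A" "finite B" "card A = card B" "A \<noteq> B"
  shows "card (A \<inter> B) < card A"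
proof -
  have "A \<inter> B \<subset> A"
    using assms card_subset_eq[of B "A \<inter> B"] by (metis Int_lower1 Int_lower2 psubsetI)
  then show ?thesis
    using assms(1) by (rule psubset_card_mono[rotated])
qed

lemma card_pred_subset_eq_remove:
  assumes "finite A" "S \<subseteq> A" "card S = card A - 1" "A \<noteq> {}"
  obtains x where "x \<in> A" "S = A - {x}"
proof -
  have "card A > 0"
    using assms(1,4) by (simp add: card_gt_0_iff)
  with assms have "card (A - S) = 1"
    by (simp add: card_Diff_subset finite_subset)
  then obtain x where "A - S = {x}"
    by (rule card_1_singletonE)
  with assms(2) show thesis
    by (intro that) auto
qed

lemma TJ_vertices_finite_card:
  "A \<in> TJ_vertices V E k \<Longrightarrow> finite A \<and> card A = k"
  by (simp add: TJ_vertices_def is_clique_def)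

lemma TJ_adj_card_Int: "TJ_adj V E k A B \<Longrightarrow> card (A \<inter> B) = k - 1"
  by (simp add: TJ_adj_def)

lemma TJ_adj_iff_card_Int:
  "A \<in> TJ_vertices V E k \<Longrightarrow> B \<in> TJ_vertices V E k \<Longrightarrow>
    TJ_adj V E k A B \<longleftrightarrow> card (A \<inter> B) = k - 1"
  by (simp add: TJ_adj_def TJ_vertices_def)

lemma TJ_common_neighborsD:
  assumes "C \<in> common_neighbors (TJ_vertices V E k) (TJ_adj V E k) A B"
  shows "C \<in> TJ_vertices V E k" "card (A \<inter> C) = k - 1" "card (B \<inter> C) = k - 1"
  using assms by (auto simp: common_neighbors_def TJ_adj_card_Int)

lemma TJ_common_neighbor_card_Int_ge:
  assumes "C \<in> common_neighbors (TJ_vertices V E k) (TJ_adj V E k) A B"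
  shows "k - 2 \<le> card (A \<inter> B \<inter> C)"
proof -
  have "finite C" "card C = k"
    using TJ_common_neighborsD(1)[OF assms] by (auto dest: TJ_vertices_finite_card)
  then show ?thesis
    using card_Int_add_le_card_Int_Int[of C A B] TJ_common_neighborsD(2,3)[OF assms] by linarith
qed

lemma TJ_nonadjacent_card_Int:
  assumes "k \<ge> 2" "A \<in> TJ_vertices V E k" "B \<in> TJ_vertices V E k"
    and "A \<noteq> B" "\<not> TJ_adj V E k A B"
    and "C \<in> common_neighbors (TJ_vertices V E k) (TJ_adj V E k) A B"
  shows "card (A \<inter> B) = k - 2"
proof -
  have A: "finite A" "card A = k" and B: "finite B" "card B = k"
    using assms(2,3) by (auto dest: TJ_vertices_finite_card)
  have "k - 2 \<le> card (A \<inter> B)"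
    using TJ_common_neighbor_card_Int_ge[OF assms(6)] card_mono[of "A \<inter> B" "A \<inter> B \<inter> C"] A
    by (meson Int_lower1 finite_Int le_trans)
  moreover have "card (A \<inter> B) < k"
    using card_Int_less_if_neq[OF A(1) B(1)] A B assms(4) by simp
  moreover have "card (A \<inter> B) \<noteq> k - 1"
    using assms(2,3,5) TJ_adj_iff_card_Int by blast
  ultimately show ?thesis
    using assms(1) by linarith
qed

lemma TJ_common_neighbor_Int_eq_remove:
  assumes "k \<ge> 1" "A \<in> TJ_vertices V E k" "card (A \<inter> B) = k - 2"
    and "C \<in> common_neighbors (TJ_vertices V E k) (TJ_adj V E k) A B"
  obtains x where "x \<in> A - B" "A \<inter> C = A - {x}"
proof -
  have A: "finite A" "card A = k"
    using assms(2) by (auto dest: TJ_vertices_finite_card)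
  have "card (A \<inter> B \<inter> C) \<le> card (A \<inter> B)"
    using A(1) by (intro card_mono) auto
  with assms(3) TJ_common_neighbor_card_Int_ge[OF assms(4)]
  have "A \<inter> B \<inter> C = A \<inter> B"
    using A(1) by (intro card_subset_eq) auto
  moreover have "card (A \<inter> C) = card A - 1" "A \<noteq> {}"
    using TJ_common_neighborsD(2)[OF assms(4)] A assms(1) by auto
  then obtain x where "x \<in> A" "A \<inter> C = A - {x}"
    using card_pred_subset_eq_remove[of A "A \<inter> C"] A(1) by blast
  ultimately show thesis
    by (intro that) auto
qed

lemma triangle_free_TJ_neighbor_eq:
  assumes "triangle_free (TJ_vertices V E k) (TJ_adj V E k)"
    and "A \<in> TJ_vertices V E k" "C \<in> TJ_vertices V E k" "D \<in> TJ_vertices V E k"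
    and "TJ_adj V E k A C" "TJ_adj V E k A D" "A \<inter> C = A \<inter> D"
  shows "C = D"
proof (rule ccontr)
  assume "C \<noteq> D"
  have C: "finite C" "card C = k" and D: "finite D" "card D = k"
    using assms(3,4) by (auto dest: TJ_vertices_finite_card)
  have "k - 1 \<le> card (C \<inter> D)"
    using card_mono[of "C \<inter> D" "A \<inter> C"] TJ_adj_card_Int[OF assms(5)] assms(7) C by auto
  moreover have "card (C \<inter> D) < k"
    using card_Int_less_if_neq[OF C(1) D(1)] C D \<open>C \<noteq> D\<close> by simp
  ultimately have "TJ_adj V E k C D"
    using TJ_adj_iff_card_Int[OF assms(3,4)] by simp
  with assms show False
    unfolding triangle_free_def by blast
qed

theorem lemma4p6:
  fixes V :: "'a set" and E :: "'a \<Rightarrow> 'a \<Rightarrow> bool" and k :: nat and A B :: "'a set"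
  assumes "simple_graph V E"
    and "k \<ge> 2"
    and "triangle_free (TJ_vertices V E k) (TJ_adj V E k)"
    and "A \<in> TJ_vertices V E k" and "B \<in> TJ_vertices V E k"
    and "A \<noteq> B" and "\<not> TJ_adj V E k A B"
  shows "card (common_neighbors (TJ_vertices V E k) (TJ_adj V E k) A B) \<le> 2"
proof (cases "common_neighbors (TJ_vertices V E k) (TJ_adj V E k) A B = {}")
  case False
  define N where "N = common_neighbors (TJ_vertices V E k) (TJ_adj V E k) A B"
  have A: "finite A" "card A = k"
    using assms(4) by (auto dest: TJ_vertices_finite_card)
  have AB: "card (A \<inter> B) = k - 2"
    using False TJ_nonadjacent_card_Int[OF assms(2,4-7)] by blast
  have "inj_on ((\<inter>) A) N"
  proof (rule inj_onI)
    fix C D assume "C \<in> N" "D \<in> N" "A \<inter> C = A \<inter> D"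
    then show "C = D"
      using triangle_free_TJ_neighbor_eq[OF assms(3,4)] unfolding N_def common_neighbors_def by blast
  qed
  moreover have "(\<inter>) A ` N \<subseteq> (\<lambda>x. A - {x}) ` (A - B)"
  proof clarify
    fix C assume "C \<in> N"
    then obtain x where "x \<in> A - B" "A \<inter> C = A - {x}"
      using TJ_common_neighbor_Int_eq_remove[OF _ assms(4) AB] assms(2) unfolding N_def
      by (metis one_le_numeral order_trans)
    then show "A \<inter> C \<in> (\<lambda>x. A - {x}) ` (A - B)"
      by blast
  qed
  ultimately have "card N \<le> card ((\<lambda>x. A - {x}) ` (A - B))"
    using A(1) by (intro card_inj_on_le) auto
  also have "\<dots> \<le> card (A - B)"
    by (rule card_image_le) (use A(1) in simp)
  also have "card (A - B) = 2"
    using A AB assms(2) by (simp add: card_Diff_subset_Int Diff_Int2)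
  finally show ?thesis
    unfolding N_def .
qed simp

end
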